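(* Let $m\ge3$ be odd, $Q_{4m}=\langle a,b\mid a^m=1=b^4,\ b^{-1}ab=a^{-1}\rangle$, $s$ an odd prime with $\gcd(s,m)=1$, $q$ a power of $s$, and $\zeta$ a primitive $m$-th root of unity in $\overline{\mathbb{F}}_s$. Suppose $\theta:=\zeta+\zeta^{-1}\in\mathbb{F}_q$ and $\zeta\notin\mathbb{F}_q$. Let $\alpha,\beta\in\mathbb{F}_q$ satisfy $\alpha^2+\beta^2=\theta^2-4$, put $A=\begin{pmatrix}\alpha&\beta\\\beta&-\alpha\end{pmatrix}$, $\tilde A=\frac{\theta}{2}I+\frac12A$ and $B=\begin{pmatrix}0&-1\\1&0\end{pmatrix}$. Then $\beta\ne0$, the assignment $\mu(a)=\tilde A$, $\mu(b)=B$ defines a faithful irreducible representation $\mu:Q_{4m}\to GL_2(\mathbb{F}_q)$, and $\mu$ is equivalent over $\overline{\mathbb{F}}_s$ to the representation $\tau$ given by $\tau(a)=\begin{pmatrix}\zeta&0\\0&\zeta^{-1}\end{pmatrix}$, $\tau(b)=\begin{pmatrix}0&-1\\1&0\end{pmatrix}$.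
   Context: $\overline{\mathbb{F}}_s$ is an algebraic closure of $\mathbb{F}_s$, and $\mathbb{F}_q$ is its subfield with $q$ elements. *)

theory Defs
  imports "HOL-Analysis.Analysis" "HOL-Computational_Algebra.Polynomial"
begin

definition is_subfield :: "'k::field set \<Rightarrow> bool" where
  "is_subfield K \<longleftrightarrow> 0 \<in> K \<and> 1 \<in> K \<and>
     (\<forall>x\<in>K. \<forall>y\<in>K. x + y \<in> K \<and> x - y \<in> K \<and> x * y \<in> K) \<and>
     (\<forall>x\<in>K. x \<noteq> 0 \<longrightarrow> inverse x \<in> K)"

definition algebraically_closed_field :: "'k::field itself \<Rightarrow> bool" where
  "algebraically_closed_field _ \<longleftrightarrow>
     (\<forall>p :: 'k poly. degree p \<ge> 1 \<longrightarrow> (\<exists>x. poly p x = 0))"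

definition is_alg_closure_of_prime_field :: "'k::field itself \<Rightarrow> nat \<Rightarrow> bool" where
  "is_alg_closure_of_prime_field T s \<longleftrightarrow> prime s \<and> of_nat s = (0::'k) \<and>
     algebraically_closed_field T \<and>
     (\<forall>x::'k. \<exists>p :: 'k poly. p \<noteq> 0 \<and> (\<forall>i. coeff p i \<in> range of_nat) \<and> poly p x = 0)"

definition primitive_root_of_unity :: "nat \<Rightarrow> 'k::field \<Rightarrow> bool" where
  "primitive_root_of_unity m z \<longleftrightarrow> z ^ m = 1 \<and> (\<forall>k. 0 < k \<and> k < m \<longrightarrow> z ^ k \<noteq> 1)"

definition mat2 :: "'a \<Rightarrow> 'a \<Rightarrow> 'a \<Rightarrow> 'a \<Rightarrow> 'a^2^2" where
  "mat2 a b c d = (\<chi> i j. if i = 1 then (if j = 1 then a else b) else (if j = 1 then c else d))"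

definition vec_over :: "'k set \<Rightarrow> ('k^2) set" where
  "vec_over K = {v. \<forall>i. v $ i \<in> K}"

definition GL2 :: "'k::field set \<Rightarrow> ('k^2^2) set" where
  "GL2 K = {M. (\<forall>i j. M $ i $ j \<in> K) \<and> invertible M}"

text \<open>The group Q_{4m} = <a,b | a^m = 1 = b^4, b^{-1} a b = a^{-1}> realised concretely:
  the pair (i,j) with i < m, j < 4 stands for a^i b^j; using b^j a^k = a^((-1)^j k) b^j.\<close>
definition Q_carrier :: "nat \<Rightarrow> (nat \<times> nat) set" where
  "Q_carrier m = {0..<m} \<times> {0..<4}"

definition Q_mult :: "nat \<Rightarrow> nat \<times> nat \<Rightarrow> nat \<times> nat \<Rightarrow> nat \<times> nat" where
  "Q_mult m x y = ((fst x + (if even (snd x) then fst y else m - fst y)) mod m,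
                   (snd x + snd y) mod 4)"

definition Q_a :: "nat \<times> nat" where "Q_a = (1, 0)"
definition Q_b :: "nat \<times> nat" where "Q_b = (0, 1)"

definition is_rep2 :: "nat \<Rightarrow> 'k::field set \<Rightarrow> (nat \<times> nat \<Rightarrow> 'k^2^2) \<Rightarrow> bool" where
  "is_rep2 m K \<rho> \<longleftrightarrow> (\<forall>g\<in>Q_carrier m. \<rho> g \<in> GL2 K) \<and>
     (\<forall>g\<in>Q_carrier m. \<forall>h\<in>Q_carrier m. \<rho> (Q_mult m g h) = \<rho> g ** \<rho> h)"

definition faithful_rep :: "nat \<Rightarrow> (nat \<times> nat \<Rightarrow> 'k^2^2) \<Rightarrow> bool" where
  "faithful_rep m \<rho> \<longleftrightarrow> inj_on \<rho> (Q_carrier m)"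

definition subspace_over :: "'k::field set \<Rightarrow> ('k^2) set \<Rightarrow> bool" where
  "subspace_over K W \<longleftrightarrow> W \<subseteq> vec_over K \<and> 0 \<in> W \<and>
     (\<forall>v\<in>W. \<forall>w\<in>W. v + w \<in> W) \<and> (\<forall>c\<in>K. \<forall>w\<in>W. c *s w \<in> W)"

definition irreducible_rep :: "nat \<Rightarrow> 'k::field set \<Rightarrow> (nat \<times> nat \<Rightarrow> 'k^2^2) \<Rightarrow> bool" where
  "irreducible_rep m K \<rho> \<longleftrightarrow>
     \<not> (\<exists>W. subspace_over K W \<and> W \<noteq> {0} \<and> W \<noteq> vec_over K \<and>
            (\<forall>g\<in>Q_carrier m. \<forall>w\<in>W. \<rho> g *v w \<in> W))"

text \<open>Equivalence over the whole (algebraically closed) field.\<close>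
definition equivalent_reps :: "nat \<Rightarrow> (nat \<times> nat \<Rightarrow> 'k::field^2^2) \<Rightarrow> (nat \<times> nat \<Rightarrow> 'k^2^2) \<Rightarrow> bool" where
  "equivalent_reps m \<rho> \<sigma> \<longleftrightarrow>
     (\<exists>P. invertible P \<and> (\<forall>g\<in>Q_carrier m. P ** \<rho> g = \<sigma> g ** P))"

end

theory Submission
  imports Defs
begin

(*
  Put theta = z + 1/z and delta = z - 1/z.  The matrix A is traceless with
  A^2 = (alpha^2 + beta^2) I = delta^2 I, so the matrix At = (theta I + A)/2 has the
  eigenvalues (theta +- delta)/2, i.e. z and 1/z, exactly like D = diag(z, 1/z).
  Concretely, P = [beta, delta - alpha; alpha - delta, beta] satisfies P A = diag(delta, -delta) P
  and commutes with B, so P intertwines the assignments a |-> At, b |-> B and a |-> D, b |-> B.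

  Finally, mu is
  conjugate to tau via P (which is invertible since beta <> 0), hence a faithful
  representation equivalent to tau; it is defined over K, and irreducible over K because
  its eigenvalues z, 1/z lie outside K.
*)

lemma mat2_nth [simp]:
  "mat2 a b c d $ 1 $ 1 = a" "mat2 a b c d $ 1 $ 2 = b"
  "mat2 a b c d $ 2 $ 1 = c" "mat2 a b c d $ 2 $ 2 = d"
  by (simp_all add: mat2_def)

lemma mat2_eq_iff:
  "mat2 a b c d = mat2 a' b' c' d' \<longleftrightarrow> a = a' \<and> b = b' \<and> c = c' \<and> d = d'"
  unfolding vec_eq_iff forall_2 by simp

lemma mat_eq_mat2: "(mat x :: 'a::zero^2^2) = mat2 x 0 0 x"
  unfolding vec_eq_iff forall_2 by (simp add: mat_def)

lemma mat2_mult: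
  "(mat2 a b c d :: 'a::semiring_1^2^2) ** mat2 e f g h
     = mat2 (a*e + b*g) (a*f + b*h) (c*e + d*g) (c*f + d*h)"
  unfolding vec_eq_iff forall_2 by (simp add: matrix_matrix_mult_def sum_2)

lemma mat2_mult_vec:
  "((mat2 a b c d :: 'a::semiring_1^2^2) *v v) $ 1 = a * v$1 + b * v$2"
  "((mat2 a b c d :: 'a::semiring_1^2^2) *v v) $ 2 = c * v$1 + d * v$2"
  by (simp_all add: matrix_vector_mult_def sum_2)

lemma invertible_mat2_iff:
  "invertible (mat2 a b c d :: 'k::field^2^2) \<longleftrightarrow> a * d - b * c \<noteq> 0"
  by (simp add: invertible_det_nz det_2)

lemma vec2_eq_iff: "(v :: 'a^2) = w \<longleftrightarrow> v $ 1 = w $ 1 \<and> v $ 2 = w $ 2"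
  unfolding vec_eq_iff forall_2 ..

(* An eigenvalue c of [a, b; d, e] is a root of the characteristic polynomial
   X^2 - (a + e) X + (a e - b d): multiply the eigenvector equations by the adjugate. *)
lemma eigenvalue_char_poly:
  fixes a b d e c :: "'k::field"
  assumes eig: "mat2 a b d e *v w = c *s w" and w: "w \<noteq> 0"
  shows "c^2 - (a + e) * c + (a * e - b * d) = 0"
proof -
  let ?\<chi> = "c^2 - (a + e) * c + (a * e - b * d)"
  have r1: "(a - c) * w$1 + b * w$2 = 0" and r2: "d * w$1 + (e - c) * w$2 = 0"
    using eig unfolding vec2_eq_iff by (simp_all add: mat2_mult_vec algebra_simps)
  have "?\<chi> * w$1 = (e - c) * ((a - c) * w$1 + b * w$2) - b * (d * w$1 + (e - c) * w$2)"
    and "?\<chi> * w$2 = (a - c) * (d * w$1 + (e - c) * w$2) - d * ((a - c) * w$1 + b * w$2)"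
    by (simp_all add: algebra_simps power2_eq_square)
  then have "?\<chi> * w$1 = 0" "?\<chi> * w$2 = 0" using r1 r2 by simp_all
  moreover have "w$1 \<noteq> 0 \<or> w$2 \<noteq> 0" using w by (simp add: vec2_eq_iff)
  ultimately show ?thesis by auto
qed

fun mpow :: "'a::semiring_1^'n^'n \<Rightarrow> nat \<Rightarrow> 'a^'n^'n" where
  "mpow M 0 = mat 1"
| "mpow M (Suc n) = M ** mpow M n"

lemma mpow_add: "mpow M (a + b) = mpow M a ** mpow M b"
  by (induction a) (simp_all add: matrix_mul_assoc)

lemma mpow_mod:
  assumes "mpow M k = mat 1"
  shows "mpow M (n mod k) = mpow M n"
proof -
  have "mpow M (k * q) = mat 1" for q
    by (induction q) (simp_all add: mpow_add assms)
  then have "mpow M n = mpow M (n mod k)"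
    by (metis div_mult_mod_eq mpow_add matrix_mul_lid mult.commute)
  then show ?thesis ..
qed

lemma mpow_intertwine: "P ** X = Y ** P \<Longrightarrow> P ** mpow X n = mpow Y n ** P"
  by (induction n) (simp_all, metis matrix_mul_assoc)

lemma mpow_invertible: "invertible (X::'a::field^'n^'n) \<Longrightarrow> invertible (mpow X n)"
proof (induction n)
  case 0
  show ?case unfolding invertible_def by (auto intro: exI[of _ "mat 1"])
qed (simp add: invertible_mult)

lemma mpow_diag: "mpow (mat2 x 0 0 y) n = mat2 (x ^ n) 0 0 (y ^ n)"
  by (induction n) (simp_all add: mat_eq_mat2 mat2_mult)

(* half_shift t M = (t I + M) / 2, the form in which the matrix At is given.  Intertwining
   and eigenvectors of M carry over to half_shift t M. *)

definition half_shift :: "'k::field \<Rightarrow> 'k^'n^'n \<Rightarrow> 'k^'n^'n" where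
  "half_shift t M = mat (t / 2) + (\<chi> i j. (1 / 2) * M $ i $ j)"

lemma half_shift_intertwine:
  fixes P M N :: "'k::field^'n^'n"
  assumes "P ** M = N ** P"
  shows "P ** half_shift t M = half_shift t N ** P"
proof -
  have scaled: "P ** (\<chi> i j. h * M $ i $ j) = (\<chi> i j. h * (P ** M) $ i $ j)"
    and scaled': "(\<chi> i j. h * N $ i $ j) ** P = (\<chi> i j. h * (N ** P) $ i $ j)" for h
    by (simp_all add: vec_eq_iff matrix_matrix_mult_def sum_distrib_left mult.left_commute mult.assoc)
  have scalar: "P ** mat (t / 2) = mat (t / 2) ** P"
    by (simp add: vec_eq_iff matrix_matrix_mult_def mat_def mult_delta_left mult_delta_right
        sum.delta sum.delta' mult.commute)
  have rdistrib: "(B + C) ** P = B ** P + C ** P" for B C :: "'k^'n^'n"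
    by (simp add: vec_eq_iff matrix_matrix_mult_def distrib_right sum.distrib)
  show ?thesis
    by (simp only: half_shift_def matrix_add_ldistrib rdistrib scaled scaled' assms scalar)
qed

lemma half_shift_eigenvector:
  fixes M :: "'k::field^'n^'n"
  assumes two: "(2::'k) \<noteq> 0" and eig: "half_shift t M *v w = c *s w"
  shows "M *v w = (2 * c - t) *s w"
proof -
  have "half_shift t M *v w = (t / 2) *s w + (1 / 2) *s (M *v w)"
    by (simp add: vec_eq_iff half_shift_def matrix_vector_mult_def mat_def sum_distrib_left
        distrib_right mult_delta_left sum.distrib sum.delta mult.assoc)
  with eig two show ?thesis by (simp add: vec_eq_iff field_simps)
qed

definition gen_rep :: "'a::semiring_1^'n^'n \<Rightarrow> 'a^'n^'n \<Rightarrow> nat \<times> nat \<Rightarrow> 'a^'n^'n" where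
  "gen_rep X Y g = mpow X (fst g) ** mpow Y (snd g)"

lemma gen_rep_generators: "gen_rep X Y Q_a = X" "gen_rep X Y Q_b = Y"
  by (simp_all add: gen_rep_def Q_a_def Q_b_def)

lemma gen_rep_mult:
  assumes Xm: "mpow X m = mat 1" and Y4: "mpow Y 4 = mat 1"
    and swap: "\<And>j k. k \<le> m \<Longrightarrow>
                 mpow Y j ** mpow X k = mpow X (if even j then k else m - k) ** mpow Y j"
    and h: "h \<in> Q_carrier m"
  shows "gen_rep X Y (Q_mult m g h) = gen_rep X Y g ** gen_rep X Y h"
proof -
  obtain i j k l where g: "g = (i, j)" and hkl: "h = (k, l)" by (cases g, cases h)
  have "k \<le> m" using h hkl by (simp add: Q_carrier_def)
  define k' where "k' = (if even j then k else m - k)"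
  have "gen_rep X Y g ** gen_rep X Y h = mpow X i ** (mpow Y j ** mpow X k) ** mpow Y l"
    by (simp add: gen_rep_def g hkl matrix_mul_assoc)
  also have "\<dots> = mpow X (i + k') ** mpow Y (j + l)"
    unfolding swap[OF \<open>k \<le> m\<close>] k'_def[symmetric] by (simp add: mpow_add matrix_mul_assoc)
  also have "\<dots> = mpow X ((i + k') mod m) ** mpow Y ((j + l) mod 4)"
    by (simp add: mpow_mod[OF Xm] mpow_mod[OF Y4])
  also have "\<dots> = gen_rep X Y (Q_mult m g h)"
    by (simp add: gen_rep_def Q_mult_def g hkl k'_def)
  finally show ?thesis by simp
qed

lemma gen_rep_intertwine:
  assumes "P ** X = X' ** P" and "P ** Y = Y' ** P"
  shows "P ** gen_rep X Y g = gen_rep X' Y' g ** P"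
  by (simp add: gen_rep_def matrix_mul_assoc mpow_intertwine[OF assms(1)])
     (simp add: mpow_intertwine[OF assms(2)] flip: matrix_mul_assoc)

lemma Q_mult_closed: "0 < m \<Longrightarrow> Q_mult m g h \<in> Q_carrier m"
  by (simp add: Q_mult_def Q_carrier_def)

lemma conjugate_rep:
  fixes P :: "'k::field^'n^'n"
  assumes P: "invertible P"
    and intertwine: "\<And>g. g \<in> G \<Longrightarrow> P ** \<rho> g = \<sigma> g ** P"
    and hom: "\<And>g h. g \<in> G \<Longrightarrow> h \<in> G \<Longrightarrow> \<sigma> (mul g h) = \<sigma> g ** \<sigma> h"
    and closed: "\<And>g h. g \<in> G \<Longrightarrow> h \<in> G \<Longrightarrow> mul g h \<in> G"
    and inv: "\<And>g. g \<in> G \<Longrightarrow> invertible (\<sigma> g)"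
    and inj: "inj_on \<sigma> G"
  shows "\<And>g h. g \<in> G \<Longrightarrow> h \<in> G \<Longrightarrow> \<rho> (mul g h) = \<rho> g ** \<rho> h"
    and "\<And>g. g \<in> G \<Longrightarrow> invertible (\<rho> g)"
    and "inj_on \<rho> G"
proof -
  obtain P' where PP': "P ** P' = mat 1" and P'P: "P' ** P = mat 1"
    using P unfolding invertible_def by blast
  have \<rho>: "\<rho> g = P' ** \<sigma> g ** P" if "g \<in> G" for g
    by (metis P'P intertwine[OF that] matrix_mul_assoc matrix_mul_lid)
  have \<sigma>: "\<sigma> g = P ** \<rho> g ** P'" if "g \<in> G" for g
    by (metis PP' intertwine[OF that] matrix_mul_assoc matrix_mul_rid)
  show "\<rho> (mul g h) = \<rho> g ** \<rho> h" if "g \<in> G" "h \<in> G" for g h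
  proof -
    have "\<rho> g ** \<rho> h = P' ** \<sigma> g ** (P ** P') ** \<sigma> h ** P"
      using that by (simp add: \<rho> matrix_mul_assoc)
    then show ?thesis using that by (simp add: \<rho> closed hom PP' matrix_mul_assoc)
  qed
  show "invertible (\<rho> g)" if "g \<in> G" for g
  proof -
    have "invertible P'" using P'P invertible_right_inverse by blast
    then show ?thesis using that P by (simp add: \<rho> inv invertible_mult)
  qed
  show "inj_on \<rho> G"
    using inj by (auto simp: inj_on_def \<sigma>)
qed

definition matrix_over :: "'k set \<Rightarrow> 'k^'n^'m \<Rightarrow> bool" where
  "matrix_over K M \<longleftrightarrow> (\<forall>i j. M $ i $ j \<in> K)"

locale subfield =
  fixes K :: "'k::field set"
  assumes is_subfield: "is_subfield K"
begin

lemma zero_in [simp]: "0 \<in> K" and one_in [simp]: "1 \<in> K"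
  and add_in: "x \<in> K \<Longrightarrow> y \<in> K \<Longrightarrow> x + y \<in> K"
  and diff_in: "x \<in> K \<Longrightarrow> y \<in> K \<Longrightarrow> x - y \<in> K"
  and mult_in: "x \<in> K \<Longrightarrow> y \<in> K \<Longrightarrow> x * y \<in> K"
  using is_subfield unfolding is_subfield_def by auto

lemma inverse_in: "x \<in> K \<Longrightarrow> inverse x \<in> K"
  using is_subfield unfolding is_subfield_def by (cases "x = 0") auto

lemma divide_in: "x \<in> K \<Longrightarrow> y \<in> K \<Longrightarrow> x / y \<in> K"
  by (simp add: divide_inverse mult_in inverse_in)

lemma uminus_in: "x \<in> K \<Longrightarrow> - x \<in> K"
  using diff_in[OF zero_in] by fastforce

lemma two_in: "2 \<in> K"
  using add_in[OF one_in one_in] by (simp add: one_add_one)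

lemma matrix_over_mat2: "matrix_over K (mat2 a b c d) \<longleftrightarrow> a \<in> K \<and> b \<in> K \<and> c \<in> K \<and> d \<in> K"
  unfolding matrix_over_def forall_2 by simp

lemma matrix_over_mult:
  "matrix_over K M \<Longrightarrow> matrix_over K N \<Longrightarrow> matrix_over K (M ** (N :: 'k^2^2))"
  unfolding matrix_over_def by (simp add: matrix_matrix_mult_def sum_2 add_in mult_in)

lemma matrix_over_mpow: "matrix_over K M \<Longrightarrow> matrix_over K (mpow (M :: 'k^2^2) n)"
  by (induction n) (simp_all add: mat_eq_mat2 matrix_over_mat2 matrix_over_mult)

lemma vec_over_iff: "v \<in> vec_over K \<longleftrightarrow> v $ 1 \<in> K \<and> v $ 2 \<in> K"
  unfolding vec_over_def forall_2 by simp

lemma proportional_over: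
  assumes "w \<in> vec_over K" "u \<in> vec_over K" "w \<noteq> 0" "w$1 * u$2 - w$2 * u$1 = 0"
  shows "\<exists>c\<in>K. u = c *s w"
proof (cases "w$1 = 0")
  case True
  with assms have "w$2 \<noteq> 0" "u$1 = 0" by (auto simp: vec2_eq_iff)
  with True assms show ?thesis
    by (intro bexI[of _ "u$2 / w$2"]) (auto simp: vec2_eq_iff vec_over_iff divide_in)
next
  case False
  with assms have "u$2 = u$1 / w$1 * w$2" by (simp add: field_simps)
  with False assms show ?thesis
    by (intro bexI[of _ "u$1 / w$1"]) (auto simp: vec2_eq_iff vec_over_iff divide_in)
qed

(* Cramer's rule: two vectors of a K-subspace with nonzero determinant span all of K^2. *)
lemma spanning_pair:
  assumes W: "subspace_over K W" and "w \<in> W" "u \<in> W"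
    and dt: "w$1 * u$2 - w$2 * u$1 \<noteq> 0"
  shows "W = vec_over K"
proof
  show "W \<subseteq> vec_over K" using W by (simp add: subspace_over_def)
  show "vec_over K \<subseteq> W"
  proof
    fix v assume "v \<in> vec_over K"
    define dt where "dt = w$1 * u$2 - w$2 * u$1"
    define c1 where "c1 = (v$1 * u$2 - v$2 * u$1) / dt"
    define c2 where "c2 = (w$1 * v$2 - w$2 * v$1) / dt"
    have K: "v$1 \<in> K" "v$2 \<in> K" "w$1 \<in> K" "w$2 \<in> K" "u$1 \<in> K" "u$2 \<in> K"
      using \<open>v \<in> vec_over K\<close> \<open>w \<in> W\<close> \<open>u \<in> W\<close> W
      by (auto simp: subspace_over_def vec_over_iff)
    have "c1 \<in> K" "c2 \<in> K"
      unfolding c1_def c2_def dt_def using K by (simp_all add: divide_in diff_in mult_in)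
    have "dt \<noteq> 0" using dt by (simp add: dt_def)
    have "(v$1 * u$2 - v$2 * u$1) * w$1 + (w$1 * v$2 - w$2 * v$1) * u$1 = v$1 * dt"
      and "(v$1 * u$2 - v$2 * u$1) * w$2 + (w$1 * v$2 - w$2 * v$1) * u$2 = v$2 * dt"
      unfolding dt_def by (simp_all add: algebra_simps)
    then have "v = c1 *s w + c2 *s u"
      using \<open>dt \<noteq> 0\<close> unfolding c1_def c2_def vec2_eq_iff by (simp add: field_simps)
    then show "v \<in> W"
      using W \<open>w \<in> W\<close> \<open>u \<in> W\<close> \<open>c1 \<in> K\<close> \<open>c2 \<in> K\<close> by (simp add: subspace_over_def)
  qed
qed

(* A 2x2 matrix without eigenvalues in K leaves no proper nonzero K-subspace invariant:
  for nonzero w in W, the vectors w and M w are independent and hence span K^2. *)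
lemma invariant_subspace_trivial:
  assumes no_eig: "\<And>c w. c \<in> K \<Longrightarrow> w \<noteq> 0 \<Longrightarrow> M *v w \<noteq> c *s w"
    and W: "subspace_over K W" "W \<noteq> {0}" and inv: "\<forall>w\<in>W. M *v w \<in> W"
  shows "W = vec_over K"
proof -
  obtain w where w: "w \<in> W" "w \<noteq> 0" using W by (auto simp: subspace_over_def)
  have Mw: "M *v w \<in> W" using inv w by blast
  have "w$1 * (M *v w)$2 - w$2 * (M *v w)$1 \<noteq> 0"
  proof
    assume "w$1 * (M *v w)$2 - w$2 * (M *v w)$1 = 0"
    then obtain c where "c \<in> K" "M *v w = c *s w"
      using proportional_over w Mw W(1) by (meson subsetD subspace_over_def)
    then show False using no_eig w by blast
  qed
  then show ?thesis using spanning_pair W(1) w(1) Mw by blast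
qed

lemma matrix_over_half_shift:
  "t \<in> K \<Longrightarrow> matrix_over K M \<Longrightarrow> matrix_over K (half_shift t M)"
  unfolding matrix_over_def half_shift_def
  by (simp add: mat_def add_in mult_in divide_in two_in)

end

definition quat_B :: "'a::ring_1^2^2" where
  "quat_B = mat2 0 (-1) 1 0"

lemma mpow_quat_B_4: "mpow quat_B 4 = mat 1"
  by (simp add: numeral_eq_Suc quat_B_def mat_eq_mat2 mat2_mult)

lemma invertible_quat_B: "invertible (quat_B :: 'k::field^2^2)"
  by (simp add: quat_B_def invertible_mat2_iff)

lemma quat_B_swap_diag:
  "mpow quat_B j ** mat2 x 0 0 y = (if even j then mat2 x 0 0 y else mat2 y 0 0 x) ** mpow quat_B j"
proof (induction j arbitrary: x y)
  case (Suc j)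
  have "mpow quat_B (Suc j) ** mat2 x 0 0 y = quat_B ** (mpow quat_B j ** mat2 x 0 0 y)"
    by (simp add: matrix_mul_assoc)
  also have "\<dots> = quat_B ** ((if even j then mat2 x 0 0 y else mat2 y 0 0 x) ** mpow quat_B j)"
    using Suc by simp
  also have "\<dots> = (if even (Suc j) then mat2 x 0 0 y else mat2 y 0 0 x) ** mpow quat_B (Suc j)"
    by (simp add: matrix_mul_assoc quat_B_def mat2_mult)
  finally show ?case .
qed simp

locale primitive_root =
  fixes m :: nat and z :: "'k::field"
  assumes char_not_2: "(2::'k) \<noteq> 0" and m_ge_3: "m \<ge> 3" and m_odd: "odd m"
    and primitive: "primitive_root_of_unity m z"
begin

lemma z_pow_m: "z ^ m = 1" and z_pow_ne_1: "0 < k \<Longrightarrow> k < m \<Longrightarrow> z ^ k \<noteq> 1"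
  using primitive unfolding primitive_root_of_unity_def by auto

lemma z_nonzero: "z \<noteq> 0"
  using z_pow_m m_ge_3 by (cases m) auto

lemma z_square_ne_1: "z ^ 2 \<noteq> 1"
proof
  assume "z ^ 2 = 1"
  moreover obtain k where "m = 2 * k + 1" using m_odd oddE by blast
  ultimately have "z ^ m = z" by (simp add: power_add power_mult)
  with z_pow_m z_pow_ne_1[of 1] m_ge_3 show False by simp
qed

(* 1/z = z^(m-1), in the form needed for the relation b a^k = a^(m-k) b. *)
lemma inverse_z_pow: "k \<le> m \<Longrightarrow> inverse z ^ k = z ^ (m - k) \<and> z ^ k = inverse z ^ (m - k)"
proof -
  assume "k \<le> m"
  then have "z ^ (m - k) * z ^ k = 1" using z_pow_m by (simp flip: power_add)
  then show ?thesis by (simp add: power_inverse field_simps z_nonzero)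
qed

lemma z_pow_inj: "i < m \<Longrightarrow> k < m \<Longrightarrow> z ^ i = z ^ k \<Longrightarrow> i = k"
proof -
  have "z ^ i \<noteq> z ^ k" if "i < k" "k < m" for i k
  proof
    assume "z ^ i = z ^ k"
    moreover have "z ^ i * z ^ (k - i) = z ^ k" using \<open>i < k\<close> by (simp flip: power_add)
    ultimately have "z ^ (k - i) = 1" using z_nonzero by simp
    then show False using z_pow_ne_1[of "k - i"] that by simp
  qed
  then show "i < m \<Longrightarrow> k < m \<Longrightarrow> z ^ i = z ^ k \<Longrightarrow> i = k"
    by (metis linorder_neqE_nat)
qed

(* Since m is odd, no power of z is the negative of another one. *)
lemma z_pow_ne_neg: "z ^ i \<noteq> - (z ^ k)"
proof
  assume "z ^ i = - (z ^ k)"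
  then have "(z ^ m) ^ i = - ((z ^ m) ^ k)"
    using m_odd by (metis power_minus_odd power_mult mult.commute)
  then show False using z_pow_m char_not_2 by (simp add: eq_neg_iff_add_eq_0 one_add_one)
qed

definition D :: "'k^2^2" where
  "D = mat2 z 0 0 (inverse z)"

definition \<tau> :: "nat \<times> nat \<Rightarrow> 'k^2^2" where
  "\<tau> = gen_rep D quat_B"

lemma mpow_D: "mpow D k = mat2 (z ^ k) 0 0 (inverse z ^ k)"
  by (simp add: D_def mpow_diag)

lemma \<tau>_mult: "g \<in> Q_carrier m \<Longrightarrow> h \<in> Q_carrier m \<Longrightarrow> \<tau> (Q_mult m g h) = \<tau> g ** \<tau> h"
  unfolding \<tau>_def
proof (rule gen_rep_mult[where m = m])
  show "mpow D m = mat 1" by (simp add: mpow_D z_pow_m mat_eq_mat2 power_inverse)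
  show "mpow quat_B j ** mpow D k = mpow D (if even j then k else m - k) ** mpow quat_B j"
    if "k \<le> m" for j k
    unfolding mpow_D quat_B_swap_diag using inverse_z_pow[OF that] by auto
qed (simp add: mpow_quat_B_4)

lemma \<tau>_invertible: "invertible (\<tau> g)"
  by (simp add: \<tau>_def gen_rep_def invertible_mult mpow_invertible invertible_quat_B
      D_def invertible_mat2_iff z_nonzero)

(* tau is faithful: the diagonal (or antidiagonal) entries of tau(i, j) determine j, and then
   z^i determines i. *)
lemma \<tau>_inj: "inj_on \<tau> (Q_carrier m)"
proof (rule inj_onI)
  fix g h assume g: "g \<in> Q_carrier m" and h: "h \<in> Q_carrier m" and eq: "\<tau> g = \<tau> h"
  obtain i j k l where gh: "g = (i, j)" "h = (k, l)" by (cases g, cases h)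
  have "i < m" "k < m" "j \<in> {0, 1, 2, 3}" "l \<in> {0, 1, 2, 3}"
    using g h gh by (auto simp: Q_carrier_def)
  then have "z ^ i = z ^ k \<and> j = l"
    using eq z_pow_ne_neg[of i k] z_pow_ne_neg[of k i] z_nonzero
    unfolding gh \<tau>_def gen_rep_def mpow_D
    by (auto simp: numeral_eq_Suc quat_B_def mat_eq_mat2 mat2_mult mat2_eq_iff power_inverse)
  then show "g = h" using z_pow_inj \<open>i < m\<close> \<open>k < m\<close> gh by simp
qed

end

locale quaternion_rep_setting = primitive_root m z + subfield K
  for m :: nat and z :: "'k::field" and K :: "'k set" +
  fixes \<alpha> \<beta> :: 'k
  assumes trace_in: "z + inverse z \<in> K" and z_notin: "z \<notin> K"
    and \<alpha>_in: "\<alpha> \<in> K" and \<beta>_in: "\<beta> \<in> K"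
    and sum_squares: "\<alpha>^2 + \<beta>^2 = (z + inverse z)^2 - 4"
begin

definition \<theta> :: 'k where "\<theta> = z + inverse z"
definition \<delta> :: 'k where "\<delta> = z - inverse z"

lemma z_half_sums: "z = (\<theta> + \<delta>) / 2" "inverse z = (\<theta> - \<delta>) / 2"
  using char_not_2 by (simp_all add: \<theta>_def \<delta>_def field_simps)

lemma \<delta>_square: "\<delta>^2 = \<alpha>^2 + \<beta>^2"
  using z_nonzero unfolding \<delta>_def sum_squares by (simp add: power2_eq_square field_simps)

(* delta = 0 would mean z^2 = 1. *)
lemma \<delta>_nonzero: "\<delta> \<noteq> 0"
  using z_square_ne_1 z_nonzero by (auto simp: \<delta>_def power2_eq_square field_simps)

lemma inverse_z_notin: "inverse z \<notin> K"
  using z_notin inverse_in by force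

(* If beta were 0, then alpha = +-delta and z = (theta +- alpha)/2 would lie in K. *)
lemma \<beta>_nonzero: "\<beta> \<noteq> 0"
proof
  assume "\<beta> = 0"
  then have "(\<alpha> - \<delta>) * (\<alpha> + \<delta>) = 0"
    using \<delta>_square by (simp add: power2_eq_square algebra_simps)
  then have "\<alpha> = \<delta> \<or> \<alpha> = - \<delta>"
    by (auto simp: eq_neg_iff_add_eq_0)
  then have "z = (\<theta> + \<alpha>) / 2 \<or> z = (\<theta> - \<alpha>) / 2"
    using z_half_sums(1) by auto
  moreover have "(\<theta> + \<alpha>) / 2 \<in> K" "(\<theta> - \<alpha>) / 2 \<in> K"
    using trace_in \<alpha>_in by (simp_all add: \<theta>_def add_in diff_in divide_in two_in)
  ultimately show False using z_notin by metis
qed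

definition A :: "'k^2^2" where "A = mat2 \<alpha> \<beta> \<beta> (- \<alpha>)"
definition At :: "'k^2^2" where "At = half_shift \<theta> A"

(* A is traceless with A^2 = delta^2 I, so its eigenvalues are +-delta. *)
lemma A_eigenvalue: "A *v w = e *s w \<Longrightarrow> w \<noteq> 0 \<Longrightarrow> e = \<delta> \<or> e = - \<delta>"
proof -
  assume "A *v w = e *s w" "w \<noteq> 0"
  then have "e^2 - (\<alpha> + - \<alpha>) * e + (\<alpha> * - \<alpha> - \<beta> * \<beta>) = 0"
    unfolding A_def by (rule eigenvalue_char_poly)
  then have "(e - \<delta>) * (e + \<delta>) = 0"
    using \<delta>_square by (simp add: power2_eq_square algebra_simps)
  then show ?thesis by (auto simp: eq_neg_iff_add_eq_0)
qed

(* Consequently the eigenvalues of At = (theta I + A)/2 are z and 1/z, which lie outside K. *)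
lemma At_no_eigenvalue_in_K:
  assumes "c \<in> K" "w \<noteq> 0"
  shows "At *v w \<noteq> c *s w"
proof
  assume "At *v w = c *s w"
  then have "A *v w = (2 * c - \<theta>) *s w"
    unfolding At_def by (rule half_shift_eigenvector[OF char_not_2])
  then have "2 * c - \<theta> = \<delta> \<or> 2 * c - \<theta> = - \<delta>"
    using A_eigenvalue \<open>w \<noteq> 0\<close> by blast
  then have "2 * c = \<theta> + \<delta> \<or> 2 * c = \<theta> - \<delta>"
    by (auto simp: algebra_simps)
  then have "c = (\<theta> + \<delta>) / 2 \<or> c = (\<theta> - \<delta>) / 2"
    using char_not_2 by (auto simp: field_simps)
  then have "c = z \<or> c = inverse z"
    by (metis z_half_sums)
  then show False using \<open>c \<in> K\<close> z_notin inverse_z_notin by auto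
qed

definition P :: "'k^2^2" where "P = mat2 \<beta> (\<delta> - \<alpha>) (\<alpha> - \<delta>) \<beta>"

(* det P = beta^2 + (delta - alpha)^2 = 2 delta (delta - alpha), using delta^2 = alpha^2 + beta^2. *)
lemma P_invertible: "invertible P"
proof -
  have "\<beta> * \<beta> - (\<delta> - \<alpha>) * (\<alpha> - \<delta>) = \<beta>^2 + (\<delta> - \<alpha>)^2"
    by (simp add: power2_eq_square algebra_simps)
  also have "\<dots> = (\<alpha>^2 + \<beta>^2) + \<delta>^2 - 2 * \<delta> * \<alpha>"
    by (simp add: power2_eq_square algebra_simps)
  also have "\<dots> = 2 * \<delta> * (\<delta> - \<alpha>)"
    unfolding \<delta>_square[symmetric] by (simp add: power2_eq_square algebra_simps)
  finally have det: "\<beta> * \<beta> - (\<delta> - \<alpha>) * (\<alpha> - \<delta>) = 2 * \<delta> * (\<delta> - \<alpha>)" .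
  show ?thesis
  proof (cases "\<alpha> = \<delta>")
    case True
    then show ?thesis unfolding P_def using \<beta>_nonzero by (simp add: invertible_mat2_iff)
  next
    case False
    then show ?thesis unfolding P_def using det char_not_2 \<delta>_nonzero by (simp add: invertible_mat2_iff)
  qed
qed

(* P diagonalises A; this is where delta^2 = alpha^2 + beta^2 enters. *)
lemma P_A: "P ** A = mat2 \<delta> 0 0 (- \<delta>) ** P"
proof -
  have "\<beta> * \<beta> = \<delta> * \<delta> - \<alpha> * \<alpha>" using \<delta>_square by (simp add: power2_eq_square)
  then show ?thesis
    unfolding P_def A_def mat2_mult mat2_eq_iff by (simp add: algebra_simps)
qed

lemma D_half_shift: "D = half_shift \<theta> (mat2 \<delta> 0 0 (- \<delta>))"
proof -
  have "\<theta> / 2 + 1 / 2 * \<delta> = z" "\<theta> / 2 + 1 / 2 * - \<delta> = inverse z"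
    by (metis add_divide_distrib times_divide_eq_left mult_1 z_half_sums(1),
        metis diff_conv_add_uminus add_divide_distrib times_divide_eq_left mult_1 z_half_sums(2))
  then show ?thesis
    unfolding D_def half_shift_def vec_eq_iff forall_2 by (simp add: mat_def)
qed

lemma P_At: "P ** At = D ** P"
  unfolding At_def D_half_shift by (rule half_shift_intertwine[OF P_A])

lemma P_quat_B: "P ** quat_B = quat_B ** P"
  by (simp add: P_def quat_B_def mat2_mult)

definition \<mu> :: "nat \<times> nat \<Rightarrow> 'k^2^2" where
  "\<mu> = gen_rep At quat_B"

lemma P_\<mu>: "P ** \<mu> g = \<tau> g ** P"
  unfolding \<mu>_def \<tau>_def by (rule gen_rep_intertwine[OF P_At P_quat_B])

lemma \<mu>_mult: "g \<in> Q_carrier m \<Longrightarrow> h \<in> Q_carrier m \<Longrightarrow> \<mu> (Q_mult m g h) = \<mu> g ** \<mu> h"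
  and \<mu>_invertible: "g \<in> Q_carrier m \<Longrightarrow> invertible (\<mu> g)"
  and \<mu>_inj: "inj_on \<mu> (Q_carrier m)"
proof -
  have "\<And>g h. g \<in> Q_carrier m \<Longrightarrow> h \<in> Q_carrier m \<Longrightarrow> Q_mult m g h \<in> Q_carrier m"
    using Q_mult_closed m_ge_3 by simp
  note conj = conjugate_rep[OF P_invertible P_\<mu> \<tau>_mult this \<tau>_invertible \<tau>_inj]
  show "g \<in> Q_carrier m \<Longrightarrow> h \<in> Q_carrier m \<Longrightarrow> \<mu> (Q_mult m g h) = \<mu> g ** \<mu> h"
    and "g \<in> Q_carrier m \<Longrightarrow> invertible (\<mu> g)" and "inj_on \<mu> (Q_carrier m)"
    using conj by blast+
qed

lemma \<mu>_over_K: "matrix_over K (\<mu> g)"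
proof -
  have "matrix_over K At"
    unfolding At_def A_def \<theta>_def
    using trace_in \<alpha>_in \<beta>_in by (simp add: matrix_over_half_shift matrix_over_mat2 uminus_in)
  moreover have "matrix_over K quat_B"
    by (simp add: quat_B_def matrix_over_mat2 uminus_in)
  ultimately show ?thesis
    by (simp add: \<mu>_def gen_rep_def matrix_over_mult matrix_over_mpow)
qed

lemma \<mu>_is_rep: "is_rep2 m K \<mu>"
  using \<mu>_over_K \<mu>_invertible \<mu>_mult
  unfolding is_rep2_def GL2_def matrix_over_def by blast

lemma \<tau>_is_rep: "is_rep2 m UNIV \<tau>"
  using \<tau>_invertible \<tau>_mult unfolding is_rep2_def GL2_def by blast

(* A subspace invariant under all of mu is in particular At-invariant, hence trivial. *)
lemma \<mu>_irreducible: "irreducible_rep m K \<mu>"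
  unfolding irreducible_rep_def
proof clarify
  fix W assume W: "subspace_over K W" "W \<noteq> {0}" "W \<noteq> vec_over K"
    and inv: "\<forall>g\<in>Q_carrier m. \<forall>w\<in>W. \<mu> g *v w \<in> W"
  have "Q_a \<in> Q_carrier m" using m_ge_3 by (simp add: Q_a_def Q_carrier_def)
  then have "\<forall>w\<in>W. At *v w \<in> W"
    using inv gen_rep_generators(1) unfolding \<mu>_def by metis
  then show False
    using invariant_subspace_trivial[OF At_no_eigenvalue_in_K W(1,2)] W(3) by blast
qed

lemma \<mu>_equivalent_\<tau>: "equivalent_reps m \<mu> \<tau>"
  unfolding equivalent_reps_def using P_invertible P_\<mu> by blast

end

lemma two_nonzero_of_odd_char:
  assumes "of_nat s = (0::'k::field)" and "odd s"
  shows "(2::'k) \<noteq> 0"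
proof
  assume "(2::'k) = 0"
  moreover obtain k where "s = 2 * k + 1" using \<open>odd s\<close> oddE by blast
  ultimately have "(of_nat s :: 'k) = 1" by simp
  with assms(1) show False by simp
qed

theorem mainTheorem7:
  fixes m s q :: nat and K :: "'k::field set" and \<zeta> \<alpha> \<beta> :: 'k
  assumes "is_alg_closure_of_prime_field TYPE('k) s"
    and "odd s"
    and "m \<ge> 3" and "odd m"
    and "coprime s m"
    and "\<exists>e\<ge>1. q = s ^ e"
    and "is_subfield K" and "finite K" and "card K = q"
    and "primitive_root_of_unity m \<zeta>"
    and "\<zeta> + inverse \<zeta> \<in> K" and "\<zeta> \<notin> K"
    and "\<alpha> \<in> K" and "\<beta> \<in> K"
    and "\<alpha>^2 + \<beta>^2 = (\<zeta> + inverse \<zeta>)^2 - 4"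
  shows "\<beta> \<noteq> 0 \<and>
    (let \<theta> = \<zeta> + inverse \<zeta>;
         A = mat2 \<alpha> \<beta> \<beta> (- \<alpha>);
         At = mat (\<theta> / 2) + (\<chi> i j. (1 / 2) * A $ i $ j);
         B = mat2 0 (-1) 1 0
     in \<exists>\<mu>. is_rep2 m K \<mu> \<and> \<mu> Q_a = At \<and> \<mu> Q_b = B \<and>
            faithful_rep m \<mu> \<and> irreducible_rep m K \<mu> \<and>
            (\<exists>\<tau>. is_rep2 m UNIV \<tau> \<and> \<tau> Q_a = mat2 \<zeta> 0 0 (inverse \<zeta>) \<and> \<tau> Q_b = B \<and>
                  equivalent_reps m \<mu> \<tau>))"
proof -
  have "(2::'k) \<noteq> 0"
    using assms(1,2) two_nonzero_of_odd_char unfolding is_alg_closure_of_prime_field_def by blast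
  then interpret quaternion_rep_setting m \<zeta> K \<alpha> \<beta>
    using assms by unfold_locales auto
  have "\<mu> Q_a = At" "\<mu> Q_b = quat_B" "\<tau> Q_a = D" "\<tau> Q_b = quat_B"
    by (simp_all add: \<mu>_def \<tau>_def gen_rep_generators)
  then show ?thesis
    using \<beta>_nonzero \<mu>_is_rep \<mu>_inj \<mu>_irreducible \<tau>_is_rep \<mu>_equivalent_\<tau>
    unfolding Let_def faithful_rep_def At_def A_def half_shift_def \<theta>_def D_def quat_B_def
    by blast
qed

end
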